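(* Let $A \in \mathbb{R}^{2\times 2}$ be nonnegative and irreducible. Then $r(t) := r\big((1-t)A + tA^{\top}\big)$, the spectral radius (Perron–Frobenius eigenvalue) of $(1-t)A+tA^\top$, is concave over $t\in(0,1)$, and strictly concave when $A$ has different (i.e. non-collinear) left and right Perron–Frobenius eigenvectors.
   Context: $r(M)$ denotes the spectral radius of a square matrix $M$. *)

theory Defs
  imports "HOL-Analysis.Convex" "Jordan_Normal_Form.Spectral_Radius"
begin

definition nonneg_mat :: "real mat \<Rightarrow> bool" where
  "nonneg_mat A \<longleftrightarrow> (\<forall>i < dim_row A. \<forall>j < dim_col A. A $$ (i, j) \<ge> 0)"

text \<open>Irreducibility of a nonnegative n x n matrix: its directed graph
  (edge i -> j iff A(i,j) > 0) is strongly connected, i.e. for all indices i, j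
  some positive power of A has a positive (i,j) entry.\<close>
definition irreducible_mat :: "real mat \<Rightarrow> bool" where
  "irreducible_mat A \<longleftrightarrow> (\<forall>i < dim_row A. \<forall>j < dim_row A.
      \<exists>k > 0. (A ^\<^sub>m k) $$ (i, j) > 0)"

definition rho :: "real mat \<Rightarrow> real" where
  "rho A = spectral_radius (map_mat complex_of_real A)"

definition strictly_concave_on :: "real set \<Rightarrow> (real \<Rightarrow> real) \<Rightarrow> bool" where
  "strictly_concave_on S f \<longleftrightarrow> convex S \<and>
    (\<forall>x\<in>S. \<forall>y\<in>S. \<forall>u. x \<noteq> y \<and> 0 < u \<and> u < 1 \<longrightarrow>
       f ((1 - u) * x + u * y) > (1 - u) * f x + u * f y)"

text \<open>Perron-Frobenius right eigenvector: entrywise positive v with A v = r(A) v;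
  left: entrywise positive w with A^T w = r(A) w.\<close>
definition pos_vec :: "real vec \<Rightarrow> bool" where
  "pos_vec v \<longleftrightarrow> (\<forall>i < dim_vec v. v $ i > 0)"

end

theory Submission
  imports Defs
begin

(* For a 2x2 real matrix with real eigenvalues and nonnegative trace, the spectral radius is
   m + sqrt D, where m is half the trace and D = ((a - d)/2)^2 + b c is the discriminant.
   Along (1 - t) A + t A^T the diagonal entries a, d stay fixed and the product of the
   off-diagonal entries becomes b c + (b - c)^2 t (1 - t).  Hence r(t) is m plus the square root
   of a nonnegative concave parabola, which is concave, and strictly concave when b \<noteq> c.
   Irreducibility gives b, c > 0; if b = c then A is symmetric, and since b \<noteq> 0 its eigenspaces
   are lines, so the left and right Perron vectors are collinear. *)

lemma concave_on_cong:
  assumes "\<And>x. x \<in> S \<Longrightarrow> f x = g x"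
  shows "concave_on S f \<longleftrightarrow> concave_on S g"
proof -
  have "f (u *\<^sub>R x + v *\<^sub>R y) = g (u *\<^sub>R x + v *\<^sub>R y)"
    if "convex S" "x \<in> S" "y \<in> S" "u \<ge> 0" "v \<ge> 0" "u + v = 1" for x y u v
    using that by (simp add: assms convexD)
  then show ?thesis
    unfolding concave_on_iff using assms by auto
qed

lemma strictly_concave_on_cong:
  assumes "\<And>x. x \<in> S \<Longrightarrow> f x = g x"
  shows "strictly_concave_on S f \<longleftrightarrow> strictly_concave_on S g"
proof -
  have "f ((1 - u) * x + u * y) = g ((1 - u) * x + u * y)"
    if "convex S" "x \<in> S" "y \<in> S" "0 < u" "u < 1" for x y u
    using that convexD[of S x y "1 - u" u] by (simp add: assms)
  then show ?thesis
    unfolding strictly_concave_on_def using assms by auto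
qed

lemma strictly_concave_on_add_const:
  assumes "strictly_concave_on S f"
  shows "strictly_concave_on S (\<lambda>x. c + f x)"
  using assms unfolding strictly_concave_on_def by (simp add: algebra_simps)

lemma concave_on_sqrt: "concave_on {0..} sqrt"
  unfolding concave_on_iff
proof (intro conjI ballI allI impI)
  fix x y u v :: real
  assume "x \<in> {0..}" "y \<in> {0..}" "0 \<le> u" "0 \<le> v" "u + v = 1"
  then have v: "v = 1 - u" by simp
  have "(u * sqrt x + v * sqrt y)\<^sup>2
      = u * (sqrt x)\<^sup>2 + v * (sqrt y)\<^sup>2 - u * v * (sqrt x - sqrt y)\<^sup>2"
    unfolding v by (simp add: power2_eq_square algebra_simps)
  also have "\<dots> = u * x + v * y - u * v * (sqrt x - sqrt y)\<^sup>2"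
    using \<open>x \<in> {0..}\<close> \<open>y \<in> {0..}\<close> by simp
  also have "\<dots> \<le> u * x + v * y"
    using \<open>0 \<le> u\<close> \<open>0 \<le> v\<close> by simp
  finally show "u * sqrt x + v * sqrt y \<le> sqrt (u *\<^sub>R x + v *\<^sub>R y)"
    by (simp add: real_le_rsqrt)
qed simp

lemma concave_on_sqrt_comp:
  fixes g :: "'a :: real_vector \<Rightarrow> real"
  assumes "concave_on S g" and "\<And>x. x \<in> S \<Longrightarrow> g x \<ge> 0"
  shows "concave_on S (\<lambda>x. sqrt (g x))"
  unfolding concave_on_iff
proof (intro conjI ballI allI impI)
  show "convex S" using assms(1) by (rule concave_on_imp_convex)
  fix x y and u v :: real
  assume xy: "x \<in> S" "y \<in> S" and uv: "0 \<le> u" "0 \<le> v" "u + v = 1"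
  have "u * sqrt (g x) + v * sqrt (g y) \<le> sqrt (u * g x + v * g y)"
    using concave_on_sqrt uv assms(2)[OF xy(1)] assms(2)[OF xy(2)] by (simp add: concave_on_iff)
  also have "\<dots> \<le> sqrt (g (u *\<^sub>R x + v *\<^sub>R y))"
    using assms(1) xy uv by (simp add: concave_on_iff)
  finally show "u * sqrt (g x) + v * sqrt (g y) \<le> sqrt (g (u *\<^sub>R x + v *\<^sub>R y))" .
qed

lemma strictly_concave_on_sqrt_comp:
  assumes "strictly_concave_on S g" and "\<And>x. x \<in> S \<Longrightarrow> g x \<ge> 0"
  shows "strictly_concave_on S (\<lambda>x. sqrt (g x))"
  unfolding strictly_concave_on_def
proof (intro conjI ballI allI impI)
  show "convex S" using assms(1) by (simp add: strictly_concave_on_def)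
  fix x y u :: real
  assume xy: "x \<in> S" "y \<in> S" and "x \<noteq> y \<and> 0 < u \<and> u < 1"
  then have "x \<noteq> y" "0 < u" "u < 1" by auto
  have "(1 - u) * sqrt (g x) + u * sqrt (g y) \<le> sqrt ((1 - u) * g x + u * g y)"
    using concave_onD[OF concave_on_sqrt, of u "g x" "g y"] \<open>0 < u\<close> \<open>u < 1\<close>
      assms(2)[OF xy(1)] assms(2)[OF xy(2)] by simp
  also have "\<dots> < sqrt (g ((1 - u) * x + u * y))"
    using assms(1) xy \<open>x \<noteq> y\<close> \<open>0 < u\<close> \<open>u < 1\<close> by (simp add: strictly_concave_on_def)
  finally show "(1 - u) * sqrt (g x) + u * sqrt (g y) < sqrt (g ((1 - u) * x + u * y))" .
qed

lemma parabola_convex_combination: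
  fixes a b u x y :: real
  shows "a + b * (((1 - u) * x + u * y) * (1 - ((1 - u) * x + u * y)))
    = (1 - u) * (a + b * (x * (1 - x))) + u * (a + b * (y * (1 - y))) + b * u * (1 - u) * (x - y)\<^sup>2"
  by (simp add: power2_eq_square algebra_simps)

lemma concave_on_parabola:
  fixes a b :: real
  assumes "b \<ge> 0" and "convex S"
  shows "concave_on S (\<lambda>t. a + b * (t * (1 - t)))"
proof (rule concave_on_linorderI[OF _ assms(2)])
  fix u x y :: real
  assume "0 < u" "u < 1"
  then have "b * u * (1 - u) * (x - y)\<^sup>2 \<ge> 0"
    using assms(1) by simp
  then show "(1 - u) * (a + b * (x * (1 - x))) + u * (a + b * (y * (1 - y)))
      \<le> a + b * (((1 - u) *\<^sub>R x + u *\<^sub>R y) * (1 - ((1 - u) *\<^sub>R x + u *\<^sub>R y)))"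
    unfolding real_scaleR_def parabola_convex_combination by linarith
qed

lemma strictly_concave_on_parabola:
  fixes a b :: real
  assumes "b > 0" and "convex S"
  shows "strictly_concave_on S (\<lambda>t. a + b * (t * (1 - t)))"
  unfolding strictly_concave_on_def
proof (intro conjI ballI allI impI)
  fix x y u :: real
  assume "x \<noteq> y \<and> 0 < u \<and> u < 1"
  then have "b * u * (1 - u) * (x - y)\<^sup>2 > 0"
    using assms(1) by simp
  then show "(1 - u) * (a + b * (x * (1 - x))) + u * (a + b * (y * (1 - y)))
      < a + b * (((1 - u) * x + u * y) * (1 - ((1 - u) * x + u * y)))"
    unfolding parabola_convex_combination by linarith
qed (rule assms(2))

lemma det_mat2:
  assumes "(A :: 'a :: comm_ring_1 mat) \<in> carrier_mat 2 2"
  shows "det A = A $$ (0,0) * A $$ (1,1) - A $$ (0,1) * A $$ (1,0)"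
proof -
  have "det A = (\<Sum>i<2. A $$ (i,0) * cofactor A i 0)"
    by (rule laplace_expansion_column[OF assms]) simp
  also have "\<dots> = A $$ (0,0) * cofactor A 0 0 + A $$ (1,0) * cofactor A 1 0"
    by (simp add: numeral_2_eq_2)
  also have "cofactor A 0 0 = A $$ (1,1)"
    using assms by (simp add: cofactor_def mat_delete_def det_single)
  also have "cofactor A 1 0 = - A $$ (0,1)"
    using assms by (simp add: cofactor_def mat_delete_def det_single)
  finally show ?thesis by (simp add: algebra_simps)
qed

lemma eigenvalue_mat2_iff:
  assumes "(M :: 'a :: field mat) \<in> carrier_mat 2 2"
  shows "eigenvalue M e \<longleftrightarrow> (M $$ (0,0) - e) * (M $$ (1,1) - e) - M $$ (0,1) * M $$ (1,0) = 0"
  using assms by (simp add: eigenvalue_det det_mat2 char_matrix_def)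

lemma rho_mat2:
  fixes M :: "real mat"
  defines "m \<equiv> (M $$ (0,0) + M $$ (1,1)) / 2"
    and "D \<equiv> ((M $$ (0,0) - M $$ (1,1)) / 2)\<^sup>2 + M $$ (0,1) * M $$ (1,0)"
  assumes M: "M \<in> carrier_mat 2 2" and "m \<ge> 0" and "D \<ge> 0"
  shows "rho M = m + sqrt D"
proof -
  define s where "s = sqrt D"
  have "s \<ge> 0" and s_sq: "s * s = D"
    using \<open>D \<ge> 0\<close> by (simp_all add: s_def)
  let ?C = "map_mat complex_of_real M"
  have char_factor: "(of_real (M $$ (0,0)) - e) * (of_real (M $$ (1,1)) - e)
      - of_real (M $$ (0,1)) * of_real (M $$ (1,0))
      = (e - of_real (m + s)) * (e - of_real (m - s))" for e :: complex
  proof -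
    have "complex_of_real (s * s) = of_real D" by (simp only: s_sq)
    then show ?thesis
      by (simp add: m_def D_def field_simps power2_eq_square)
  qed
  have "eigenvalue ?C e \<longleftrightarrow> (e - of_real (m + s)) * (e - of_real (m - s)) = 0" for e
    unfolding char_factor[symmetric] using M by (simp add: eigenvalue_mat2_iff)
  then have "spectrum ?C = {of_real (m + s), of_real (m - s)}"
    by (auto simp: spectrum_def)
  then have "spectral_radius ?C = max \<bar>m + s\<bar> \<bar>m - s\<bar>"
    unfolding spectral_radius_def by (simp del: of_real_add of_real_diff)
  also have "\<dots> = m + s"
    using \<open>m \<ge> 0\<close> \<open>s \<ge> 0\<close> by linarith
  finally show ?thesis by (simp add: rho_def s_def)
qed

lemma rho_interpolation_transpose_mat2:
  fixes A :: "real mat" and t :: real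
  assumes A: "A \<in> carrier_mat 2 2" and "nonneg_mat A" and "0 \<le> t" "t \<le> 1"
  shows "rho ((1 - t) \<cdot>\<^sub>m A + t \<cdot>\<^sub>m transpose_mat A)
    = (A $$ (0,0) + A $$ (1,1)) / 2 + sqrt (((A $$ (0,0) - A $$ (1,1)) / 2)\<^sup>2
        + A $$ (0,1) * A $$ (1,0) + (A $$ (0,1) - A $$ (1,0))\<^sup>2 * (t * (1 - t)))"
proof -
  define M where "M = (1 - t) \<cdot>\<^sub>m A + t \<cdot>\<^sub>m transpose_mat A"
  have M: "M \<in> carrier_mat 2 2" using A by (simp add: M_def)
  have entry: "M $$ (i,j) = (1 - t) * A $$ (i,j) + t * A $$ (j,i)" if "i < 2" "j < 2" for i j
    using A that by (simp add: M_def)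
  have nonneg: "A $$ (i,j) \<ge> 0" if "i < 2" "j < 2" for i j
    using assms(2) A that by (simp add: nonneg_mat_def)
  have diag: "M $$ (i,i) = A $$ (i,i)" if "i < 2" for i
    using entry[OF that that] by (simp add: algebra_simps)
  have off_diag: "M $$ (0,1) * M $$ (1,0)
      = A $$ (0,1) * A $$ (1,0) + (A $$ (0,1) - A $$ (1,0))\<^sup>2 * (t * (1 - t))"
    by (simp add: entry algebra_simps power2_eq_square)
  have "M $$ (0,1) * M $$ (1,0) \<ge> 0"
    unfolding off_diag using nonneg[of 0 1] nonneg[of 1 0] \<open>0 \<le> t\<close> \<open>t \<le> 1\<close> by simp
  then have "rho M = (M $$ (0,0) + M $$ (1,1)) / 2
      + sqrt (((M $$ (0,0) - M $$ (1,1)) / 2)\<^sup>2 + M $$ (0,1) * M $$ (1,0))"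
    using nonneg[of 0 0] nonneg[of 1 1] by (intro rho_mat2[OF M]) (simp_all add: diag)
  then show ?thesis
    unfolding M_def[symmetric] off_diag by (simp add: diag)
qed

lemma pow_mat2_off_diagonal_zero:
  fixes A :: "'a :: semiring_1 mat"
  assumes A: "A \<in> carrier_mat 2 2" and ij: "i < 2" "j < 2" "i \<noteq> j" and "A $$ (i,j) = 0"
  shows "(A ^\<^sub>m k) $$ (i,j) = 0"
proof (induction k)
  case 0
  then show ?case using A ij by simp
next
  case (Suc k)
  have "A ^\<^sub>m k \<in> carrier_mat 2 2" using A by simp
  moreover have "i = 0 \<and> j = 1 \<or> i = 1 \<and> j = 0" using ij by auto
  ultimately show ?case using A Suc \<open>A $$ (i,j) = 0\<close>
    by (auto simp: scalar_prod_def numeral_2_eq_2 row_def col_def)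
qed

lemma irreducible_mat2_off_diagonal_pos:
  assumes A: "A \<in> carrier_mat 2 2" and "nonneg_mat A" "irreducible_mat A"
    and ij: "i < 2" "j < 2" "i \<noteq> j"
  shows "A $$ (i,j) > 0"
proof (rule ccontr)
  assume "\<not> A $$ (i,j) > 0"
  with assms(2) A ij have "A $$ (i,j) = 0" by (force simp: nonneg_mat_def)
  moreover obtain k where "(A ^\<^sub>m k) $$ (i,j) > 0"
    using assms(3) A ij by (auto simp: irreducible_mat_def)
  ultimately show False
    using pow_mat2_off_diagonal_zero[OF A ij] by simp
qed

lemma eigenvectors_mat2_collinear:
  fixes A :: "'a :: field mat"
  assumes A: "A \<in> carrier_mat 2 2" and "A $$ (0,1) \<noteq> 0"
    and v: "v \<in> carrier_vec 2" "A *\<^sub>v v = r \<cdot>\<^sub>v v" "v $ 0 \<noteq> 0"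
    and w: "w \<in> carrier_vec 2" "A *\<^sub>v w = r \<cdot>\<^sub>v w"
  shows "w = (w $ 0 / v $ 0) \<cdot>\<^sub>v v"
proof -
  have first_row: "A $$ (0,1) * x $ 1 = (r - A $$ (0,0)) * x $ 0"
    if "x \<in> carrier_vec 2" "A *\<^sub>v x = r \<cdot>\<^sub>v x" for x
  proof -
    have "(A *\<^sub>v x) $ 0 = r * x $ 0" using that by simp
    with A that(1) show ?thesis
      by (simp add: scalar_prod_def numeral_2_eq_2 row_def algebra_simps)
  qed
  have "A $$ (0,1) * (v $ 0 * w $ 1) = v $ 0 * ((r - A $$ (0,0)) * w $ 0)"
    unfolding first_row[OF w, symmetric] by (simp only: ac_simps)
  also have "\<dots> = w $ 0 * ((r - A $$ (0,0)) * v $ 0)"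
    by (simp only: ac_simps)
  also have "\<dots> = A $$ (0,1) * (v $ 1 * w $ 0)"
    unfolding first_row[OF v(1,2), symmetric] by (simp only: ac_simps)
  finally have cross: "v $ 0 * w $ 1 = v $ 1 * w $ 0"
    using \<open>A $$ (0,1) \<noteq> 0\<close> by simp
  show ?thesis
  proof (rule eq_vecI)
    fix i
    assume "i < dim_vec ((w $ 0 / v $ 0) \<cdot>\<^sub>v v)"
    with v(1) have "i = 0 \<or> i = 1" by auto
    with v(1,3) w(1) cross show "w $ i = ((w $ 0 / v $ 0) \<cdot>\<^sub>v v) $ i"
      by (auto simp: field_simps)
  qed (use v w in simp)
qed

lemma transpose_eigenvector_mat2_collinear:
  fixes A :: "real mat"
  assumes A: "A \<in> carrier_mat 2 2" and "A $$ (0,1) = A $$ (1,0)" "A $$ (0,1) \<noteq> 0"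
    and v: "v \<in> carrier_vec 2" "pos_vec v" "A *\<^sub>v v = r \<cdot>\<^sub>v v"
    and w: "w \<in> carrier_vec 2" "transpose_mat A *\<^sub>v w = r \<cdot>\<^sub>v w"
  shows "\<exists>c. w = c \<cdot>\<^sub>v v"
proof -
  have "transpose_mat A = A"
    using A \<open>A $$ (0,1) = A $$ (1,0)\<close> by (intro eq_matI) (auto simp: less_2_cases_iff)
  with w have "A *\<^sub>v w = r \<cdot>\<^sub>v w" by simp
  moreover have "v $ 0 > 0" using v by (simp add: pos_vec_def)
  ultimately have "w = (w $ 0 / v $ 0) \<cdot>\<^sub>v v"
    using eigenvectors_mat2_collinear[OF A \<open>A $$ (0,1) \<noteq> 0\<close> v(1,3) _ w(1)] by simp
  then show ?thesis ..
qed

theorem theorem1: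
  fixes A :: "real mat"
  assumes "A \<in> carrier_mat 2 2"
    and "nonneg_mat A"
    and "irreducible_mat A"
  shows "concave_on {0<..<1} (\<lambda>t. rho ((1 - t) \<cdot>\<^sub>m A + t \<cdot>\<^sub>m transpose_mat A)) \<and>
         ((\<exists>v w. v \<in> carrier_vec 2 \<and> w \<in> carrier_vec 2 \<and> pos_vec v \<and> pos_vec w \<and>
            A *\<^sub>v v = rho A \<cdot>\<^sub>v v \<and> transpose_mat A *\<^sub>v w = rho A \<cdot>\<^sub>v w \<and>
            (\<forall>c::real. w \<noteq> c \<cdot>\<^sub>v v))
         \<longrightarrow> strictly_concave_on {0<..<1} (\<lambda>t. rho ((1 - t) \<cdot>\<^sub>m A + t \<cdot>\<^sub>m transpose_mat A)))"
proof -
  note A = assms(1)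
  let ?r = "\<lambda>t. rho ((1 - t) \<cdot>\<^sub>m A + t \<cdot>\<^sub>m transpose_mat A)"
  define m where "m = (A $$ (0,0) + A $$ (1,1)) / 2"
  define a where "a = ((A $$ (0,0) - A $$ (1,1)) / 2)\<^sup>2 + A $$ (0,1) * A $$ (1,0)"
  define b where "b = (A $$ (0,1) - A $$ (1,0))\<^sup>2"
  let ?g = "\<lambda>t. m + sqrt (a + b * (t * (1 - t)))"
  have pos: "A $$ (0,1) > 0" "A $$ (1,0) > 0"
    using irreducible_mat2_off_diagonal_pos[OF A assms(2,3)] by auto
  have rho_eq: "?r t = ?g t" if "t \<in> {0<..<1}" for t
    using rho_interpolation_transpose_mat2[OF A assms(2)] that by (simp add: m_def a_def b_def)
  have radicand_nonneg: "a + b * (t * (1 - t)) \<ge> 0" if "t \<in> {0<..<1}" for t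
    using pos that by (simp add: a_def b_def)
  have concave_iff: "concave_on {0<..<1} ?r \<longleftrightarrow> concave_on {0<..<1} ?g"
    and strictly_concave_iff: "strictly_concave_on {0<..<1} ?r \<longleftrightarrow> strictly_concave_on {0<..<1} ?g"
    by (intro concave_on_cong strictly_concave_on_cong rho_eq; assumption)+
  show ?thesis
    unfolding concave_iff strictly_concave_iff
  proof (intro conjI impI; (elim exE conjE)?)
    show "concave_on {0<..<1} ?g"
      by (intro concave_on_add concave_on_const[THEN iffD2] concave_on_sqrt_comp
          concave_on_parabola radicand_nonneg) (auto simp: b_def)
  next
    fix v w
    assume "v \<in> carrier_vec 2" "w \<in> carrier_vec 2" "pos_vec v" "pos_vec w"
      "A *\<^sub>v v = rho A \<cdot>\<^sub>v v" "transpose_mat A *\<^sub>v w = rho A \<cdot>\<^sub>v w" "\<forall>c. w \<noteq> c \<cdot>\<^sub>v v"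
    then have "A $$ (0,1) \<noteq> A $$ (1,0)"
      using transpose_eigenvector_mat2_collinear[OF A _ less_imp_neq[OF pos(1), symmetric]] by blast
    then show "strictly_concave_on {0<..<1} ?g"
      by (intro strictly_concave_on_add_const strictly_concave_on_sqrt_comp
          strictly_concave_on_parabola radicand_nonneg) (auto simp: b_def)
  qed
qed

end
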